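(* Let $\mathcal C$ be a set of representatives of the conjugacy classes of $G$. Under the isomorphism $\mathrm{HH}^\bullet(S(V)\#G)\cong\bigoplus_{g\in\mathcal C}\mathrm{HH}^\bullet(S(V),S(V)\otimes g)^{Z(g)}$ (which identifies $\alpha\in\mathrm{HH}^\bullet(S(V),S(V)\otimes g)^{Z(g)}$ with $T^G_{Z(g)}(\alpha)=\sum_{h\in[G/Z(g)]}{}^h\alpha$), the cup product corresponds to the product $\dot\smile$ given as follows: for $\alpha\in\mathrm{HH}^\bullet(S(V),S(V)\otimes g)^{Z(g)}$ and $\beta\in\mathrm{HH}^\bullet(S(V),S(V)\otimes h)^{Z(h)}$ ($g,h\in\mathcal C$), $$\alpha\ \dot\smile\ \beta=\sum_{x\in D}T^{Z(k)}_{{}^yZ(g)\cap{}^{yx}Z(h)}\big({}^y\alpha\smile{}^{yx}\beta\big),$$ where $D$ is a set of representatives of the double cosets $Z(g)\backslash G/Z(h)$, and for each $x\in D$, $k=k(x)\in\mathcal C$ and $y=y(x)\in G$ are chosen so that ${}^yg\cdot{}^{yx}h=k$. Here ${}^y\alpha\smile{}^{yx}\beta$ is the cup product in $\mathrm{HH}^\bullet(S(V),S(V)\#G)^{{}^yZ(g)\cap{}^{yx}Z(h)}$, and the transfer lands in the $k$-component $\mathrm{HH}^\bullet(S(V),S(V)\otimes k)^{Z(k)}$.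
   Context: Let $G$ be a finite group acting linearly on a finite-dimensional complex vector space $V$; fix a $G$-invariant Hermitian inner product; $V^g$ denotes the fixed space of $g$ and $(V^g)^\perp$ its orthogonal complement. $S(V)\#G$ is the skew group algebra. $\mathrm{HH}^\bullet(S(V),S(V)\#G)$ (Hochschild cohomology with cup product) decomposes as $\bigoplus_{g\in G}\mathrm{HH}^\bullet(S(V),S(V)\otimes g)$, where the $g$-component $\mathrm{HH}^\bullet(S(V),S(V)\otimes g)$ is isomorphic to $S(V^g)\otimes\bigwedge^{\bullet-\operatorname{codim}V^g}(V^g)^*\otimes\bigwedge^{\operatorname{codim}V^g}((V^g)^\perp)^*\otimes g$. $G$ acts on $\mathrm{HH}^\bullet(S(V),S(V)\#G)$ by algebra automorphisms (induced from its action on $V$ and conjugation on $S(V)\#G$), mapping the $g$-component to the $xgx^{-1}$-component, ${}^x\alpha$ denoting the image of $\alpha$ under $x$; ${}^yL=yLy^{-1}$ for a subgroup $L$ and ${}^yg=ygy^{-1}$. It is known that $\mathrm{HH}^\bullet(S(V)\#G)\cong\mathrm{HH}^\bullet(S(V),S(V)\#G)^G$ as algebras. $Z(g)$ is the centralizer of $g$ in $G$. For subgroups $J\le L\le G$ and a $G$-algebra $A$, the transfer $T^L_J:A^J\to A^L$ is $T^L_J(a)=\sum_{h\in[L/J]}{}^ha$, with $[L/J]$ a set of left coset representatives. *)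

theory Defs
  imports "HOL-Algebra.Coset"
begin

text \<open>Abstract setting: a finite group G (HOL-Algebra) acting on a ring A (playing the role of
  HH(S(V), S(V)#G) with cup product), which is G-graded: A is the direct sum of components
  comp g (playing the role of HH(S(V), S(V) tensor g)), the product maps comp g x comp h into
  comp (g h), and x in G acts by ring automorphisms mapping comp g to comp (x g x^-1).\<close>

definition conjg :: "('g, 'm) monoid_scheme \<Rightarrow> 'g \<Rightarrow> 'g \<Rightarrow> 'g" where
  "conjg G y g = y \<otimes>\<^bsub>G\<^esub> g \<otimes>\<^bsub>G\<^esub> inv\<^bsub>G\<^esub> y"

definition conjset :: "('g, 'm) monoid_scheme \<Rightarrow> 'g \<Rightarrow> 'g set \<Rightarrow> 'g set" where
  "conjset G y L = conjg G y ` L"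

definition centr :: "('g, 'm) monoid_scheme \<Rightarrow> 'g \<Rightarrow> 'g set" where
  "centr G g = {x \<in> carrier G. x \<otimes>\<^bsub>G\<^esub> g = g \<otimes>\<^bsub>G\<^esub> x}"

definition invariants :: "('g \<Rightarrow> 'a \<Rightarrow> 'a) \<Rightarrow> 'g set \<Rightarrow> 'a set" where
  "invariants act J = {a. \<forall>j\<in>J. act j a = a}"

definition lcosets_in :: "('g, 'm) monoid_scheme \<Rightarrow> 'g set \<Rightarrow> 'g set \<Rightarrow> 'g set set" where
  "lcosets_in G L J = {x <#\<^bsub>G\<^esub> J | x. x \<in> L}"

text \<open>Transfer T^L_J(a) = sum over a set of left coset representatives h of L/J of h.a
  (representatives chosen by Hilbert choice; independent of the choice on J-invariants).\<close>
definition transfer :: "('g, 'm) monoid_scheme \<Rightarrow> ('g \<Rightarrow> 'a \<Rightarrow> 'a::comm_monoid_add)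
    \<Rightarrow> 'g set \<Rightarrow> 'g set \<Rightarrow> 'a \<Rightarrow> 'a" where
  "transfer G act L J a = (\<Sum>c\<in>lcosets_in G L J. act (SOME r. r \<in> c) a)"

definition double_coset :: "('g, 'm) monoid_scheme \<Rightarrow> 'g set \<Rightarrow> 'g \<Rightarrow> 'g set \<Rightarrow> 'g set" where
  "double_coset G H x K = {a \<otimes>\<^bsub>G\<^esub> x \<otimes>\<^bsub>G\<^esub> b | a b. a \<in> H \<and> b \<in> K}"

end

theory Submission
  imports Defs
begin

text \<open>
  Writing \<open>T\<^sup>G\<^sub>H(\<alpha>) T\<^sup>G\<^sub>K(\<beta>)\<close> as a sum over pairs of
  cosets \<open>(a H, b K)\<close>, we split \<open>G/H \<times> G/K\<close> into \<open>G\<close>-orbits; these are indexed by the double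
  cosets \<open>H x K\<close> containing \<open>a\<inverse> b\<close>, and the orbit of \<open>(y H, y x K)\<close> is parametrised by
  \<open>G/J\<close> with \<open>J = y H y\<inverse> \<inter> (y x) K (y x)\<inverse>\<close> its stabiliser. Hence each orbit contributes
  one transfer \<open>T\<^sup>G\<^sub>J(y\<alpha> \<cdot> (yx)\<beta>)\<close> (Mackey's product formula, valid for arbitrary subgroups
  \<open>H\<close>, \<open>K\<close>). For \<open>H = Z(g)\<close>, \<open>K = Z(h)\<close> the stabiliser centralises \<open>k = y g y\<inverse> \<cdot> (yx) h (yx)\<inverse>\<close>,
  so transitivity \<open>T\<^sup>G\<^sub>J = T\<^sup>G\<^sub>Z\<^sub>(\<^sub>k\<^sub>) \<circ> T\<^sup>Z\<^sup>(\<^sup>k\<^sup>)\<^sub>J\<close> gives the theorem, while grading and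
  invariance of the inner transfer follow from \<open>Z(k)\<close> fixing \<open>k\<close>.
\<close>

context group begin

lemma inv_mult_cancel_left [simp]:
  "x \<in> carrier G \<Longrightarrow> y \<in> carrier G \<Longrightarrow> inv x \<otimes> (x \<otimes> y) = y"
  by (simp add: m_assoc [symmetric])

lemma mult_inv_cancel_left [simp]:
  "x \<in> carrier G \<Longrightarrow> y \<in> carrier G \<Longrightarrow> x \<otimes> (inv x \<otimes> y) = y"
  by (simp add: m_assoc [symmetric])

lemmas assoc_inv_simps = m_assoc inv_mult_group

lemma mem_lcoset:
  assumes J: "subgroup J G" and a: "a \<in> carrier G"
  shows "b \<in> a <# J \<longleftrightarrow> b \<in> carrier G \<and> inv a \<otimes> b \<in> J"
proof
  assume "b \<in> a <# J"
  then obtain j where "j \<in> J" "b = a \<otimes> j" unfolding l_coset_def by auto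
  then show "b \<in> carrier G \<and> inv a \<otimes> b \<in> J"
    using a subgroup.mem_carrier[OF J] by auto
next
  assume b: "b \<in> carrier G \<and> inv a \<otimes> b \<in> J"
  then have "b = a \<otimes> (inv a \<otimes> b)" using a by simp
  then show "b \<in> a <# J" using b unfolding l_coset_def by blast
qed

lemma lcoset_eq_iff:
  assumes J: "subgroup J G" and a: "a \<in> carrier G" and b: "b \<in> carrier G"
  shows "a <# J = b <# J \<longleftrightarrow> inv a \<otimes> b \<in> J"
proof
  assume "a <# J = b <# J"
  moreover have "b \<in> b <# J" using mem_lcoset[OF J b] b subgroup.one_closed[OF J] by simp
  ultimately have "b \<in> a <# J" by simp
  then show "inv a \<otimes> b \<in> J" using mem_lcoset[OF J a] by simp
next
  assume "inv a \<otimes> b \<in> J"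
  then have "b \<in> a <# J" using mem_lcoset[OF J a] b by simp
  then show "a <# J = b <# J" using l_repr_independence[OF _ a J] by simp
qed

lemma lcoset_absorb:
  assumes J: "subgroup J G" and a: "a \<in> carrier G" and j: "j \<in> J"
  shows "(a \<otimes> j) <# J = a <# J"
  using lcoset_eq_iff[OF J a, of "a \<otimes> j"] j a subgroup.mem_carrier[OF J j] by auto

lemma mem_conjset:
  assumes L: "L \<subseteq> carrier G" and y: "y \<in> carrier G"
  shows "u \<in> conjset G y L \<longleftrightarrow> u \<in> carrier G \<and> inv y \<otimes> u \<otimes> y \<in> L"
proof
  assume "u \<in> conjset G y L"
  then obtain z where "z \<in> L" "u = y \<otimes> z \<otimes> inv y" by (auto simp: conjset_def conjg_def)
  then show "u \<in> carrier G \<and> inv y \<otimes> u \<otimes> y \<in> L" using L y by (auto simp: assoc_inv_simps)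
next
  assume u: "u \<in> carrier G \<and> inv y \<otimes> u \<otimes> y \<in> L"
  then have "u = y \<otimes> (inv y \<otimes> u \<otimes> y) \<otimes> inv y" using y by (simp add: m_assoc)
  then show "u \<in> conjset G y L" using u by (auto simp: conjset_def conjg_def)
qed

lemma conjset_subgroup:
  assumes H: "subgroup H G" and y: "y \<in> carrier G"
  shows "subgroup (conjset G y H) G"
proof -
  have HG: "H \<subseteq> carrier G" using subgroup.subset[OF H] .
  note mem = mem_conjset[OF HG y]
  show ?thesis
  proof (rule subgroupI)
    show "conjset G y H \<subseteq> carrier G" using mem by blast
    show "conjset G y H \<noteq> {}" 
    proof -
      have "\<one> \<in> conjset G y H" using mem y subgroup.one_closed[OF H] by simp
      then show ?thesis by blast
    qed
  next
    fix a assume "a \<in> conjset G y H"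
    then have a: "a \<in> carrier G" "inv y \<otimes> a \<otimes> y \<in> H" using mem by auto
    have "inv y \<otimes> inv a \<otimes> y = inv (inv y \<otimes> a \<otimes> y)" using a(1) y by (simp add: assoc_inv_simps)
    then show "inv a \<in> conjset G y H"
      using mem a subgroup.m_inv_closed[OF H a(2)] by simp
  next
    fix a b assume "a \<in> conjset G y H" "b \<in> conjset G y H"
    then have a: "a \<in> carrier G" "inv y \<otimes> a \<otimes> y \<in> H"
      and b: "b \<in> carrier G" "inv y \<otimes> b \<otimes> y \<in> H" using mem by auto
    have "inv y \<otimes> (a \<otimes> b) \<otimes> y = (inv y \<otimes> a \<otimes> y) \<otimes> (inv y \<otimes> b \<otimes> y)"
      using a(1) b(1) y by (simp add: m_assoc)
    then show "a \<otimes> b \<in> conjset G y H"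
      using mem a b subgroup.m_closed[OF H a(2) b(2)] by simp
  qed
qed

text \<open>Two translates \<open>r w Z\<close>, \<open>r' w Z\<close> coincide iff \<open>r\<inverse> r'\<close> lies in the conjugate
  \<open>w Z w\<inverse>\<close>; this identifies stabilisers of pairs of cosets.\<close>
lemma conj_lcoset_eq_iff:
  assumes Z: "subgroup Z G" and r: "r \<in> carrier G" "r' \<in> carrier G" and w: "w \<in> carrier G"
  shows "(r \<otimes> w) <# Z = (r' \<otimes> w) <# Z \<longleftrightarrow> inv r \<otimes> r' \<in> conjset G w Z"
proof -
  have "inv (r \<otimes> w) \<otimes> (r' \<otimes> w) = inv w \<otimes> (inv r \<otimes> r') \<otimes> w"
    using r w by (simp add: assoc_inv_simps)
  then show ?thesis
    unfolding lcoset_eq_iff[OF Z m_closed[OF r(1) w] m_closed[OF r(2) w]]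
      mem_conjset[OF subgroup.subset[OF Z] w] using r by simp
qed

lemma centr_subgroup:
  assumes g: "g \<in> carrier G"
  shows "subgroup (centr G g) G"
proof (rule subgroupI)
  show "centr G g \<subseteq> carrier G" by (auto simp: centr_def)
  show "centr G g \<noteq> {}" using g by (auto simp: centr_def intro!: exI[of _ \<one>])
next
  fix x assume "x \<in> centr G g"
  then have x: "x \<in> carrier G" "x \<otimes> g = g \<otimes> x" by (auto simp: centr_def)
  have "inv x \<otimes> g = inv x \<otimes> (g \<otimes> x) \<otimes> inv x" using x(1) g by (simp add: m_assoc)
  also have "\<dots> = g \<otimes> inv x" using x g by (simp flip: x(2) add: assoc_inv_simps)
  finally show "inv x \<in> centr G g" using x(1) by (simp add: centr_def)
next
  fix x y assume "x \<in> centr G g" "y \<in> centr G g"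
  then have x: "x \<in> carrier G" "x \<otimes> g = g \<otimes> x" and y: "y \<in> carrier G" "y \<otimes> g = g \<otimes> y"
    by (auto simp: centr_def)
  have "x \<otimes> y \<otimes> g = x \<otimes> g \<otimes> y" using x(1) y g by (simp add: m_assoc)
  also have "\<dots> = g \<otimes> (x \<otimes> y)" using x y(1) g by (simp add: m_assoc)
  finally show "x \<otimes> y \<in> centr G g" using x(1) y(1) by (simp add: centr_def)
qed

lemma conjset_centr:
  assumes y: "y \<in> carrier G" and g: "g \<in> carrier G"
  shows "conjset G y (centr G g) = centr G (conjg G y g)"
proof (rule Set.set_eqI)
  fix u
  have "inv y \<otimes> u \<otimes> y \<otimes> g = g \<otimes> (inv y \<otimes> u \<otimes> y) \<longleftrightarrow>
        u \<otimes> (y \<otimes> g \<otimes> inv y) = y \<otimes> g \<otimes> inv y \<otimes> u" if u: "u \<in> carrier G"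
  proof -
    have "inv y \<otimes> u \<otimes> y \<otimes> g = g \<otimes> (inv y \<otimes> u \<otimes> y) \<longleftrightarrow>
        y \<otimes> (inv y \<otimes> u \<otimes> y \<otimes> g) \<otimes> inv y = y \<otimes> (g \<otimes> (inv y \<otimes> u \<otimes> y)) \<otimes> inv y"
      using u y g by simp
    also have "\<dots> \<longleftrightarrow> u \<otimes> (y \<otimes> g \<otimes> inv y) = y \<otimes> g \<otimes> inv y \<otimes> u"
      using u y g by (simp add: m_assoc)
    finally show ?thesis .
  qed
  then show "u \<in> conjset G y (centr G g) \<longleftrightarrow> u \<in> centr G (conjg G y g)"
    unfolding mem_conjset[OF subgroup.subset[OF centr_subgroup[OF g]] y]
    using y g by (auto simp: centr_def conjg_def)
qed

lemma centr_mult: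
  assumes a: "a \<in> carrier G" and b: "b \<in> carrier G"
  shows "centr G a \<inter> centr G b \<subseteq> centr G (a \<otimes> b)"
proof
  fix u assume "u \<in> centr G a \<inter> centr G b"
  then have u: "u \<in> carrier G" "u \<otimes> a = a \<otimes> u" "u \<otimes> b = b \<otimes> u" by (auto simp: centr_def)
  have "u \<otimes> (a \<otimes> b) = a \<otimes> u \<otimes> b" using u a b by (simp flip: m_assoc)
  also have "\<dots> = a \<otimes> b \<otimes> u" using u a b by (simp add: m_assoc)
  finally show "u \<in> centr G (a \<otimes> b)" using u(1) by (simp add: centr_def)
qed

lemma conjg_centr:
  assumes r: "r \<in> centr G k" and k: "k \<in> carrier G"
  shows "conjg G r k = k"
proof -
  have rc: "r \<in> carrier G" and rk: "r \<otimes> k = k \<otimes> r" using r by (auto simp: centr_def)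
  show ?thesis unfolding conjg_def rk using rc k by (simp add: m_assoc)
qed

lemma twisted_stabiliser:
  assumes g: "g \<in> carrier G" and h: "h \<in> carrier G" and y: "y \<in> carrier G" and z: "z \<in> carrier G"
  shows "subgroup (conjset G y (centr G g) \<inter> conjset G z (centr G h)) G"
    and "conjset G y (centr G g) \<inter> conjset G z (centr G h) \<subseteq> centr G (conjg G y g \<otimes> conjg G z h)"
proof -
  show "subgroup (conjset G y (centr G g) \<inter> conjset G z (centr G h)) G"
    by (intro subgroups_Inter_pair conjset_subgroup centr_subgroup g h y z)
  show "conjset G y (centr G g) \<inter> conjset G z (centr G h) \<subseteq> centr G (conjg G y g \<otimes> conjg G z h)"
    unfolding conjset_centr[OF y g] conjset_centr[OF z h]
    by (intro centr_mult) (simp_all add: conjg_def y z g h)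
qed

end

definition coset_rep :: "'g set \<Rightarrow> 'g" where
  "coset_rep c = (SOME r. r \<in> c)"

lemma lcosets_in_eq: "lcosets_in G L J = (\<lambda>x. x <#\<^bsub>G\<^esub> J) ` L"
  by (auto simp: lcosets_in_def)

lemma transfer_eq_coset_reps:
  "transfer G act L J a = (\<Sum>c\<in>lcosets_in G L J. act (coset_rep c) a)"
  unfolding transfer_def coset_rep_def ..

context group begin

lemma coset_rep_decomp:
  assumes J: "subgroup J G" and x: "x \<in> carrier G"
  obtains j where "j \<in> J" "coset_rep (x <# J) = x \<otimes> j"
proof -
  have "x \<in> x <# J" using mem_lcoset[OF J x] x subgroup.one_closed[OF J] by simp
  then have "coset_rep (x <# J) \<in> x <# J" unfolding coset_rep_def by (rule someI)
  then show ?thesis using that unfolding l_coset_def by blast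
qed

lemma coset_rep_carrier:
  assumes J: "subgroup J G" and x: "x \<in> carrier G"
  shows "coset_rep (x <# J) \<in> carrier G"
proof -
  obtain j where "j \<in> J" "coset_rep (x <# J) = x \<otimes> j" using coset_rep_decomp[OF J x] .
  then show ?thesis using x subgroup.mem_carrier[OF J] by simp
qed

lemma coset_rep_lcoset:
  assumes J: "subgroup J G" and x: "x \<in> carrier G"
  shows "coset_rep (x <# J) <# J = x <# J"
  using coset_rep_decomp[OF J x] lcoset_absorb[OF J x] by metis

lemma lcosets_in_rep:
  assumes J: "subgroup J G" and L: "subgroup L G" and JL: "J \<subseteq> L"
    and c: "c \<in> lcosets_in G L J"
  shows "coset_rep c \<in> L" "coset_rep c \<in> carrier G" "coset_rep c <# J = c"
proof -
  obtain x where x: "x \<in> L" "c = x <# J" using c by (auto simp: lcosets_in_def)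
  have xc: "x \<in> carrier G" using subgroup.mem_carrier[OF L x(1)] .
  obtain j where j: "j \<in> J" "coset_rep c = x \<otimes> j" using coset_rep_decomp[OF J xc] x(2) by blast
  show "coset_rep c \<in> L" using j x(1) JL subgroup.m_closed[OF L] by auto
  then show "coset_rep c \<in> carrier G" using subgroup.mem_carrier[OF L] by blast
  show "coset_rep c <# J = c" using coset_rep_lcoset[OF J xc] x(2) by simp
qed

lemma lcosets_translate_bij:
  assumes J: "subgroup J G" and L: "subgroup L G" and JL: "J \<subseteq> L" and z: "z \<in> L"
  shows "bij_betw (\<lambda>c. z <# c) (lcosets_in G L J) (lcosets_in G L J)"
proof -
  have JG: "J \<subseteq> carrier G" using subgroup.subset[OF J] .
  have zc: "z \<in> carrier G" using subgroup.mem_carrier[OF L z] .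
  have translate: "w <# (x <# J) = (w \<otimes> x) <# J \<and> w \<otimes> x \<in> L"
    if "w \<in> L" "x \<in> L" for w x
    using lcos_m_assoc[OF JG] subgroup.mem_carrier[OF L] subgroup.m_closed[OF L] that by blast
  show ?thesis
  proof (rule bij_betw_byWitness[where f' = "\<lambda>c. inv z <# c"])
    show "\<forall>c\<in>lcosets_in G L J. inv z <# (z <# c) = c" "\<forall>c\<in>lcosets_in G L J. z <# (inv z <# c) = c"
      unfolding lcosets_in_eq
      using translate z subgroup.m_inv_closed[OF L z] zc subgroup.mem_carrier[OF L] by auto
    show "(\<lambda>c. z <# c) ` lcosets_in G L J \<subseteq> lcosets_in G L J"
      "(\<lambda>c. inv z <# c) ` lcosets_in G L J \<subseteq> lcosets_in G L J"
      unfolding lcosets_in_eq using translate z subgroup.m_inv_closed[OF L z] by auto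
  qed
qed

lemma lcosets_product_coset:
  assumes J: "subgroup J G" and K: "subgroup K G" and JK: "J \<subseteq> K"
    and c: "c \<in> lcosets_in G (carrier G) K" and d: "d \<in> lcosets_in G K J"
  shows "coset_rep c \<otimes> coset_rep d \<in> carrier G"
    and "(coset_rep c \<otimes> coset_rep d) <# J = coset_rep c <# d"
proof -
  have rc: "coset_rep c \<in> carrier G"
    using lcosets_in_rep(2)[OF K subgroup_self subgroup.subset[OF K] c] .
  note rd = lcosets_in_rep(2,3)[OF J K JK d]
  show "coset_rep c \<otimes> coset_rep d \<in> carrier G" using rc rd(1) by simp
  show "(coset_rep c \<otimes> coset_rep d) <# J = coset_rep c <# d"
    using lcos_m_assoc[OF subgroup.subset[OF J] rc rd(1)] rd(2) by simp
qed

text \<open>Conversely a coset \<open>e = u J\<close> is recovered from \<open>u K\<close> and from the coset \<open>k\<inverse> J \<in> K/J\<close>,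
  where \<open>u k\<close> is the chosen representative of \<open>u K\<close>.\<close>
lemma lcosets_product_split:
  assumes J: "subgroup J G" and K: "subgroup K G" and JK: "J \<subseteq> K"
    and e: "e \<in> lcosets_in G (carrier G) J"
  obtains k where "k \<in> K" "coset_rep (coset_rep e <# K) = coset_rep e \<otimes> k"
    "inv (coset_rep (coset_rep e <# K)) <# e = inv k <# J"
proof -
  have JG: "J \<subseteq> carrier G" using subgroup.subset[OF J] .
  note rep = lcosets_in_rep[OF J subgroup_self JG e]
  obtain k where k: "k \<in> K" "coset_rep (coset_rep e <# K) = coset_rep e \<otimes> k"
    using coset_rep_decomp[OF K rep(2)] .
  have kc: "k \<in> carrier G" using subgroup.mem_carrier[OF K k(1)] .
  have "inv (coset_rep e \<otimes> k) <# e = (inv (coset_rep e \<otimes> k) \<otimes> coset_rep e) <# J"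
    using lcos_m_assoc[OF JG, of "inv (coset_rep e \<otimes> k)" "coset_rep e"] rep(2,3) kc by simp
  also have "inv (coset_rep e \<otimes> k) \<otimes> coset_rep e = inv k"
    using rep(2) kc by (simp add: assoc_inv_simps)
  finally show ?thesis using that k by simp
qed

lemma lcosets_product_bij:
  assumes J: "subgroup J G" and K: "subgroup K G" and JK: "J \<subseteq> K"
  shows "bij_betw (\<lambda>p. (coset_rep (fst p) \<otimes> coset_rep (snd p)) <# J)
           (lcosets_in G (carrier G) K \<times> lcosets_in G K J) (lcosets_in G (carrier G) J)"
proof -
  have JG: "J \<subseteq> carrier G" and KG: "K \<subseteq> carrier G"
    using subgroup.subset[OF J] subgroup.subset[OF K] by auto
  let ?A = "lcosets_in G (carrier G) K" and ?B = "lcosets_in G K J"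
    and ?C = "lcosets_in G (carrier G) J"
  note repA = lcosets_in_rep[OF K subgroup_self KG] and repB = lcosets_in_rep[OF J K JK]
    and repC = lcosets_in_rep[OF J subgroup_self JG] and prod = lcosets_product_coset[OF J K JK]
  define split where "split e = (coset_rep e <# K, inv (coset_rep (coset_rep e <# K)) <# e)" for e
  show ?thesis
  proof (rule bij_betw_byWitness[where f' = split])
    show "\<forall>p\<in>?A \<times> ?B. split ((coset_rep (fst p) \<otimes> coset_rep (snd p)) <# J) = p"
    proof
      fix p assume "p \<in> ?A \<times> ?B"
      then obtain c d where p: "p = (c, d)" and c: "c \<in> ?A" and d: "d \<in> ?B" by blast
      let ?e = "coset_rep c \<otimes> coset_rep d"
      obtain j where j: "j \<in> J" "coset_rep (?e <# J) = ?e \<otimes> j"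
        using coset_rep_decomp[OF J prod(1)[OF c d]] .
      have "coset_rep (?e <# J) = coset_rep c \<otimes> (coset_rep d \<otimes> j)"
        using j repA(2)[OF c] repB(2)[OF d] JG by (auto simp: m_assoc)
      moreover have "coset_rep d \<otimes> j \<in> K"
        using j repB(1)[OF d] JK subgroup.m_closed[OF K] by auto
      ultimately have first: "coset_rep (?e <# J) <# K = c"
        using lcoset_absorb[OF K repA(2)[OF c]] repA(3)[OF c] by simp
      have "inv (coset_rep c) <# (coset_rep c <# d) = (inv (coset_rep c) \<otimes> ?e) <# J"
        using prod(2)[OF c d] lcos_m_assoc[OF JG _ prod(1)[OF c d]] repA(2)[OF c] by simp
      also have "\<dots> = d" using repA(2)[OF c] repB(2,3)[OF d] by simp
      finally have "inv (coset_rep c) <# (coset_rep c <# d) = d" .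
      then show "split ((coset_rep (fst p) \<otimes> coset_rep (snd p)) <# J) = p"
        using first prod(2)[OF c d] p by (simp add: split_def)
    qed
    show "\<forall>e\<in>?C. (coset_rep (fst (split e)) \<otimes> coset_rep (snd (split e))) <# J = e"
    proof
      fix e assume e: "e \<in> ?C"
      obtain k where k: "k \<in> K" "coset_rep (coset_rep e <# K) = coset_rep e \<otimes> k"
        "inv (coset_rep (coset_rep e <# K)) <# e = inv k <# J"
        using lcosets_product_split[OF J K JK e] .
      have u: "coset_rep e \<in> carrier G" and kc: "k \<in> carrier G" using repC(2)[OF e] k(1) KG by auto
      have se: "split e = (coset_rep e <# K, inv k <# J)" using k(3) by (simp add: split_def)
      have parts: "coset_rep e <# K \<in> ?A" "inv k <# J \<in> ?B"
        using u k(1) subgroup.m_inv_closed[OF K] by (auto simp: lcosets_in_def)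
      have "(coset_rep (fst (split e)) \<otimes> coset_rep (snd (split e))) <# J
                   = coset_rep (coset_rep e <# K) <# (inv k <# J)"
        unfolding se fst_conv snd_conv using prod(2)[OF parts] .
      also have "\<dots> = (coset_rep e \<otimes> k) <# (inv k <# J)" using k(2) by simp
      also have "\<dots> = e" using lcos_m_assoc[OF JG] u kc repC(3)[OF e] by (simp add: m_assoc)
      finally show "(coset_rep (fst (split e)) \<otimes> coset_rep (snd (split e))) <# J = e" .
    qed
    show "(\<lambda>p. (coset_rep (fst p) \<otimes> coset_rep (snd p)) <# J) ` (?A \<times> ?B) \<subseteq> ?C"
    proof (rule image_subsetI)
      fix p assume "p \<in> ?A \<times> ?B"
      then have "coset_rep (fst p) \<otimes> coset_rep (snd p) \<in> carrier G" using prod(1) by auto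
      then show "(coset_rep (fst p) \<otimes> coset_rep (snd p)) <# J \<in> ?C"
        unfolding lcosets_in_eq by (rule imageI)
    qed
    show "split ` ?C \<subseteq> ?A \<times> ?B"
    proof (rule image_subsetI)
      fix e assume e: "e \<in> ?C"
      obtain k where "k \<in> K" "coset_rep (coset_rep e <# K) = coset_rep e \<otimes> k"
        "inv (coset_rep (coset_rep e <# K)) <# e = inv k <# J"
        using lcosets_product_split[OF J K JK e] .
      then show "split e \<in> ?A \<times> ?B"
        using repC(2)[OF e] subgroup.m_inv_closed[OF K] by (auto simp: split_def lcosets_in_def)
    qed
  qed
qed

end

locale linear_action = group G for G :: "('g, 'm) monoid_scheme" (structure) +
  fixes act :: "'g \<Rightarrow> 'a::ab_group_add \<Rightarrow> 'a"
  assumes finite_carrier: "finite (carrier G)"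
    and act_mult: "x \<in> carrier G \<Longrightarrow> z \<in> carrier G \<Longrightarrow> act (x \<otimes> z) a = act x (act z a)"
    and act_add: "x \<in> carrier G \<Longrightarrow> act x (a + b) = act x a + act x b"
begin

lemma act_zero: "x \<in> carrier G \<Longrightarrow> act x 0 = 0"
  using act_add[of x 0 0] by simp

lemma act_sum: "x \<in> carrier G \<Longrightarrow> act x (sum f S) = (\<Sum>i\<in>S. act x (f i))"
  by (induction S rule: infinite_finite_induct) (simp_all add: act_zero act_add)

lemma invariant_act_lcoset:
  assumes J: "subgroup J G" and a: "a \<in> invariants act J" and x: "x \<in> carrier G" "z \<in> carrier G"
    and xz: "x <# J = z <# J"
  shows "act x a = act z a"
proof -
  have j: "inv x \<otimes> z \<in> J" using xz lcoset_eq_iff[OF J x] by simp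
  have "act z a = act x (act (inv x \<otimes> z) a)" using x act_mult[of x "inv x \<otimes> z" a] by simp
  also have "\<dots> = act x a" using a j by (simp add: invariants_def)
  finally show ?thesis by simp
qed

lemma act_coset_rep:
  assumes J: "subgroup J G" and a: "a \<in> invariants act J" and x: "x \<in> carrier G"
  shows "act (coset_rep (x <# J)) a = act x a"
  using invariant_act_lcoset[OF J a coset_rep_carrier[OF J x] x coset_rep_lcoset[OF J x]] .

lemma transfer_reindex:
  assumes J: "subgroup J G" and L: "subgroup L G" and JL: "J \<subseteq> L"
    and a: "a \<in> invariants act J"
    and bij: "bij_betw (\<lambda>i. e i <# J) I (lcosets_in G L J)" and e: "e ` I \<subseteq> carrier G"
  shows "transfer G act L J a = (\<Sum>i\<in>I. act (e i) a)"
proof -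
  have "transfer G act L J a = (\<Sum>i\<in>I. act (coset_rep (e i <# J)) a)"
    unfolding transfer_eq_coset_reps
    using sum.reindex_bij_betw[OF bij, of "\<lambda>c. act (coset_rep c) a"] by simp
  also have "\<dots> = (\<Sum>i\<in>I. act (e i) a)"
    using act_coset_rep[OF J a] e by (intro sum.cong) auto
  finally show ?thesis .
qed

lemma transfer_invariant:
  assumes J: "subgroup J G" and L: "subgroup L G" and JL: "J \<subseteq> L"
    and a: "a \<in> invariants act J"
  shows "transfer G act L J a \<in> invariants act L"
  unfolding invariants_def
proof (intro CollectI ballI)
  fix z assume z: "z \<in> L"
  have zc: "z \<in> carrier G" using subgroup.mem_carrier[OF L z] .
  let ?C = "lcosets_in G L J"
  note rep = lcosets_in_rep[OF J L JL]
  have "act z (transfer G act L J a) = (\<Sum>c\<in>?C. act (z \<otimes> coset_rep c) a)"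
    unfolding transfer_eq_coset_reps act_sum[OF zc] using rep(2) zc by (simp add: act_mult)
  also have "\<dots> = transfer G act L J a"
  proof (rule transfer_reindex[OF J L JL a, symmetric])
    have "(z \<otimes> coset_rep c) <# J = z <# c" if "c \<in> ?C" for c
      using lcos_m_assoc[OF subgroup.subset[OF J] zc rep(2)[OF that]] rep(3)[OF that] by simp
    then show "bij_betw (\<lambda>c. (z \<otimes> coset_rep c) <# J) ?C ?C"
      using bij_betw_cong[of ?C "\<lambda>c. (z \<otimes> coset_rep c) <# J" "\<lambda>c. z <# c" ?C]
        lcosets_translate_bij[OF J L JL z] by simp
    show "(\<lambda>c. z \<otimes> coset_rep c) ` ?C \<subseteq> carrier G" using rep(2) zc by auto
  qed
  finally show "act z (transfer G act L J a) = transfer G act L J a" .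
qed

lemma transfer_trans:
  assumes J: "subgroup J G" and K: "subgroup K G" and JK: "J \<subseteq> K"
    and a: "a \<in> invariants act J"
  shows "transfer G act (carrier G) K (transfer G act K J a) = transfer G act (carrier G) J a"
proof -
  have JG: "J \<subseteq> carrier G" and KG: "K \<subseteq> carrier G"
    using subgroup.subset[OF J] subgroup.subset[OF K] by auto
  let ?A = "lcosets_in G (carrier G) K" and ?B = "lcosets_in G K J"
  define e where "e p = coset_rep (fst p) \<otimes> coset_rep (snd p)" for p
  have "transfer G act (carrier G) K (transfer G act K J a) = (\<Sum>c\<in>?A. \<Sum>d\<in>?B. act (e (c, d)) a)"
    unfolding transfer_eq_coset_reps
    using lcosets_in_rep(2)[OF K subgroup_self KG] lcosets_in_rep(2)[OF J K JK]
    by (intro sum.cong refl) (simp add: act_sum act_mult e_def)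
  also have "\<dots> = (\<Sum>p\<in>?A \<times> ?B. act (e p) a)"
    by (simp add: sum.cartesian_product split_beta)
  also have "\<dots> = transfer G act (carrier G) J a"
    using lcosets_product_bij[OF J K JK] lcosets_product_coset(1)[OF J K JK]
    unfolding e_def by (intro transfer_reindex[OF J subgroup_self JG a, symmetric]) auto
  finally show ?thesis .
qed

end

text \<open>The pairs of cosets \<open>(a H, b K)\<close> whose relative position \<open>a\<inverse> b\<close> lies in the double coset
  \<open>H x K\<close>; this is exactly the \<open>G\<close>-orbit of \<open>(H, x K)\<close> in \<open>G/H \<times> G/K\<close>.\<close>
definition coset_pair_orbit ::
    "('g, 'm) monoid_scheme \<Rightarrow> 'g set \<Rightarrow> 'g set \<Rightarrow> 'g \<Rightarrow> ('g set \<times> 'g set) set" where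
  "coset_pair_orbit G H K x =
    {p \<in> lcosets_in G (carrier G) H \<times> lcosets_in G (carrier G) K.
       inv\<^bsub>G\<^esub> (coset_rep (fst p)) \<otimes>\<^bsub>G\<^esub> coset_rep (snd p) \<in> double_coset G H x K}"

context group begin

text \<open>The orbit of \<open>(u H, v K)\<close> is parametrised by \<open>G/J\<close>, \<open>J = u H u\<inverse> \<inter> v K v\<inverse>\<close> its
  stabiliser, via \<open>c J \<mapsto> (c u H, c v K)\<close>.\<close>
lemma orbit_map_inj:
  assumes H: "subgroup H G" and K: "subgroup K G" and u: "u \<in> carrier G" and v: "v \<in> carrier G"
    and J: "subgroup (conjset G u H \<inter> conjset G v K) G" (is "subgroup ?J G")
  shows "inj_on (\<lambda>c. ((coset_rep c \<otimes> u) <# H, (coset_rep c \<otimes> v) <# K))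
           (lcosets_in G (carrier G) ?J)"
proof (rule inj_onI)
  note rep = lcosets_in_rep[OF J subgroup_self subgroup.subset[OF J]]
  fix c c' assume c: "c \<in> lcosets_in G (carrier G) ?J" and c': "c' \<in> lcosets_in G (carrier G) ?J"
    and eq: "((coset_rep c \<otimes> u) <# H, (coset_rep c \<otimes> v) <# K)
             = ((coset_rep c' \<otimes> u) <# H, (coset_rep c' \<otimes> v) <# K)"
  have r: "coset_rep c \<in> carrier G" "coset_rep c' \<in> carrier G" using rep(2) c c' by auto
  have "inv (coset_rep c) \<otimes> coset_rep c' \<in> ?J"
    using eq conj_lcoset_eq_iff[OF H r u] conj_lcoset_eq_iff[OF K r v] by simp
  then have "coset_rep c <# ?J = coset_rep c' <# ?J" using lcoset_eq_iff[OF J r] by simp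
  then show "c = c'" using rep(3) c c' by simp
qed

lemma orbit_map_into:
  assumes H: "subgroup H G" and K: "subgroup K G" and u: "u \<in> carrier G" and v: "v \<in> carrier G"
    and r: "r \<in> carrier G"
  shows "((r \<otimes> u) <# H, (r \<otimes> v) <# K) \<in> coset_pair_orbit G H K (inv u \<otimes> v)"
proof -
  have ru: "r \<otimes> u \<in> carrier G" and rv: "r \<otimes> v \<in> carrier G" using r u v by auto
  obtain z1 where z1: "z1 \<in> H" "coset_rep ((r \<otimes> u) <# H) = r \<otimes> u \<otimes> z1"
    using coset_rep_decomp[OF H ru] .
  obtain z2 where z2: "z2 \<in> K" "coset_rep ((r \<otimes> v) <# K) = r \<otimes> v \<otimes> z2"
    using coset_rep_decomp[OF K rv] .
  have "inv (r \<otimes> u \<otimes> z1) \<otimes> (r \<otimes> v \<otimes> z2) = inv z1 \<otimes> (inv u \<otimes> v) \<otimes> z2"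
    using r u v z1(1) z2(1) subgroup.mem_carrier[OF H] subgroup.mem_carrier[OF K]
    by (simp add: assoc_inv_simps)
  then have "inv (coset_rep ((r \<otimes> u) <# H)) \<otimes> coset_rep ((r \<otimes> v) <# K)
               \<in> double_coset G H (inv u \<otimes> v) K"
    unfolding double_coset_def z1(2) z2(2) using z1(1) z2(1) subgroup.m_inv_closed[OF H] by blast
  then show ?thesis using ru rv by (auto simp: coset_pair_orbit_def lcosets_in_def)
qed

lemma orbit_map_onto:
  assumes H: "subgroup H G" and K: "subgroup K G" and u: "u \<in> carrier G" and v: "v \<in> carrier G"
    and J: "subgroup (conjset G u H \<inter> conjset G v K) G" (is "subgroup ?J G")
    and p: "p \<in> coset_pair_orbit G H K (inv u \<otimes> v)"
  shows "p \<in> (\<lambda>c. ((coset_rep c \<otimes> u) <# H, (coset_rep c \<otimes> v) <# K)) ` lcosets_in G (carrier G) ?J"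
proof -
  obtain c d where cd: "p = (c, d)" "c \<in> lcosets_in G (carrier G) H" "d \<in> lcosets_in G (carrier G) K"
    using p by (auto simp: coset_pair_orbit_def)
  note repH = lcosets_in_rep[OF H subgroup_self subgroup.subset[OF H] cd(2)]
    and repK = lcosets_in_rep[OF K subgroup_self subgroup.subset[OF K] cd(3)]
  obtain z1 z2 where z: "inv (coset_rep c) \<otimes> coset_rep d = z1 \<otimes> (inv u \<otimes> v) \<otimes> z2" "z1 \<in> H" "z2 \<in> K"
    using p cd(1) by (auto simp: coset_pair_orbit_def double_coset_def)
  have zc: "z1 \<in> carrier G" "z2 \<in> carrier G"
    using z(2,3) subgroup.mem_carrier[OF H] subgroup.mem_carrier[OF K] by auto
  \<comment> \<open>the preimage is represented by \<open>e = r z\<^sub>1 u\<inverse>\<close>, where \<open>r\<close> represents \<open>c\<close>\<close>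
  define e where "e = coset_rep c \<otimes> z1 \<otimes> inv u"
  have ec: "e \<in> carrier G" using repH(2) zc u by (simp add: e_def)
  have e': "coset_rep (e <# ?J) \<in> carrier G" "inv (coset_rep (e <# ?J)) \<otimes> e \<in> ?J"
    using coset_rep_carrier[OF J ec] coset_rep_lcoset[OF J ec] lcoset_eq_iff[OF J _ ec] by auto
  have "(coset_rep (e <# ?J) \<otimes> u) <# H = (coset_rep c \<otimes> z1) <# H"
    using conj_lcoset_eq_iff[OF H e'(1) ec u] e'(2) ec repH(2) zc u by (simp add: e_def m_assoc)
  also have "\<dots> = c" using lcoset_absorb[OF H repH(2) z(2)] repH(3) by simp
  finally have first: "(coset_rep (e <# ?J) \<otimes> u) <# H = c" .
  have "coset_rep d = coset_rep c \<otimes> (inv (coset_rep c) \<otimes> coset_rep d)"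
    using repH(2) repK(2) by simp
  then have "coset_rep d = coset_rep c \<otimes> (z1 \<otimes> (inv u \<otimes> v) \<otimes> z2)" unfolding z(1) .
  then have "e \<otimes> v = coset_rep d \<otimes> inv z2"
    using repH(2) zc u v by (simp add: e_def m_assoc)
  then have "(coset_rep (e <# ?J) \<otimes> v) <# K = (coset_rep d \<otimes> inv z2) <# K"
    using conj_lcoset_eq_iff[OF K e'(1) ec v] e'(2) by simp
  also have "\<dots> = d"
    using lcoset_absorb[OF K repK(2) subgroup.m_inv_closed[OF K z(3)]] repK(3) by simp
  finally have second: "(coset_rep (e <# ?J) \<otimes> v) <# K = d" .
  show ?thesis using first second cd(1) ec by (auto simp: lcosets_in_def)
qed

end

lemma sum_in_closed:
  fixes S :: "'a::comm_monoid_add set"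
  assumes zero: "0 \<in> S" and add: "\<And>a b. a \<in> S \<Longrightarrow> b \<in> S \<Longrightarrow> a + b \<in> S"
    and f: "\<And>i. i \<in> I \<Longrightarrow> f i \<in> S"
  shows "sum f I \<in> S"
  using f by (induction I rule: infinite_finite_induct) (auto intro: zero add)

lemma sum_split_unique:
  assumes P: "finite P" and D: "finite D" and uniq: "\<And>p. p \<in> P \<Longrightarrow> \<exists>!x. x \<in> D \<and> Q x p"
  shows "sum F P = (\<Sum>x\<in>D. sum F {p. p \<in> P \<and> Q x p})"
proof -
  have "(\<Sum>x\<in>D. sum F {p. p \<in> P \<and> Q x p}) = (\<Sum>p\<in>P. \<Sum>x\<in>{x. x \<in> D \<and> Q x p}. F p)"
    by (rule sum.swap_restrict[OF D P])
  also have "\<dots> = sum F P"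
  proof (rule sum.cong[OF refl])
    fix p assume "p \<in> P"
    then obtain x where "{x. x \<in> D \<and> Q x p} = {x}" using uniq by blast
    then show "(\<Sum>x\<in>{x. x \<in> D \<and> Q x p}. F p) = F p" by simp
  qed
  finally show ?thesis by simp
qed

locale ring_action = linear_action G act
  for G :: "('g, 'm) monoid_scheme" (structure) and act :: "'g \<Rightarrow> 'a::ring \<Rightarrow> 'a" +
  assumes act_times: "x \<in> carrier G \<Longrightarrow> act x (a * b) = act x a * act x b"
begin

lemma act_invariant_conj:
  assumes Z: "Z \<subseteq> carrier G" and a: "a \<in> invariants act Z" and w: "w \<in> carrier G"
  shows "act w a \<in> invariants act (conjset G w Z)"
  unfolding invariants_def
proof (intro CollectI ballI)
  fix j assume "j \<in> conjset G w Z"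
  then have j: "j \<in> carrier G" "inv w \<otimes> j \<otimes> w \<in> Z" using mem_conjset[OF Z w] by auto
  have "act j (act w a) = act (w \<otimes> (inv w \<otimes> j \<otimes> w)) a"
    using j w by (simp add: act_mult m_assoc)
  also have "\<dots> = act w a" using j w a by (simp add: act_mult invariants_def)
  finally show "act j (act w a) = act w a" .
qed

lemma transfer_product_orbit:
  assumes H: "subgroup H G" and K: "subgroup K G"
    and \<alpha>: "\<alpha> \<in> invariants act H" and \<beta>: "\<beta> \<in> invariants act K"
    and u: "u \<in> carrier G" and v: "v \<in> carrier G"
  shows "(\<Sum>p\<in>coset_pair_orbit G H K (inv u \<otimes> v).
             act (coset_rep (fst p)) \<alpha> * act (coset_rep (snd p)) \<beta>)
       = transfer G act (carrier G) (conjset G u H \<inter> conjset G v K) (act u \<alpha> * act v \<beta>)"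
proof -
  let ?J = "conjset G u H \<inter> conjset G v K"
  let ?Q = "lcosets_in G (carrier G) ?J"
  have J: "subgroup ?J G"
    using subgroups_Inter_pair conjset_subgroup[OF H u] conjset_subgroup[OF K v] by blast
  note rep = lcosets_in_rep[OF J subgroup_self subgroup.subset[OF J]]
  define \<psi> where "\<psi> c = ((coset_rep c \<otimes> u) <# H, (coset_rep c \<otimes> v) <# K)" for c
  have bij: "bij_betw \<psi> ?Q (coset_pair_orbit G H K (inv u \<otimes> v))"
    unfolding \<psi>_def
    using orbit_map_inj[OF H K u v J] orbit_map_into[OF H K u v] orbit_map_onto[OF H K u v J] rep(2)
    by (intro bij_betw_imageI) blast+
  have "transfer G act (carrier G) ?J (act u \<alpha> * act v \<beta>)
      = (\<Sum>c\<in>?Q. act (coset_rep (fst (\<psi> c))) \<alpha> * act (coset_rep (snd (\<psi> c))) \<beta>)"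
    unfolding transfer_eq_coset_reps \<psi>_def
    using rep(2) u v by (intro sum.cong refl) (simp add: act_coset_rep[OF H \<alpha>] act_coset_rep[OF K \<beta>] act_mult act_times)
  also have "\<dots> = (\<Sum>p\<in>coset_pair_orbit G H K (inv u \<otimes> v).
                    act (coset_rep (fst p)) \<alpha> * act (coset_rep (snd p)) \<beta>)"
    by (rule sum.reindex_bij_betw[OF bij])
  finally show ?thesis by simp
qed

lemma mackey_product_formula:
  assumes H: "subgroup H G" and K: "subgroup K G"
    and \<alpha>: "\<alpha> \<in> invariants act H" and \<beta>: "\<beta> \<in> invariants act K"
    and D_sub: "D \<subseteq> carrier G"
    and D_reps: "\<And>z. z \<in> carrier G \<Longrightarrow> \<exists>!x. x \<in> D \<and> z \<in> double_coset G H x K"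
    and y: "\<And>x. x \<in> D \<Longrightarrow> y x \<in> carrier G"
  shows "transfer G act (carrier G) H \<alpha> * transfer G act (carrier G) K \<beta>
       = (\<Sum>x\<in>D. transfer G act (carrier G) (conjset G (y x) H \<inter> conjset G (y x \<otimes> x) K)
                    (act (y x) \<alpha> * act (y x \<otimes> x) \<beta>))"
proof -
  let ?A = "lcosets_in G (carrier G) H" and ?B = "lcosets_in G (carrier G) K"
  define F where "F p = act (coset_rep (fst p)) \<alpha> * act (coset_rep (snd p)) \<beta>" for p
  note repA = lcosets_in_rep[OF H subgroup_self subgroup.subset[OF H]]
    and repB = lcosets_in_rep[OF K subgroup_self subgroup.subset[OF K]]
  have fin: "finite (?A \<times> ?B)" "finite D"
    using finite_carrier D_sub finite_subset by (auto simp: lcosets_in_eq)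
  have "transfer G act (carrier G) H \<alpha> * transfer G act (carrier G) K \<beta> = sum F (?A \<times> ?B)"
    unfolding transfer_eq_coset_reps sum_product F_def by (simp add: sum.cartesian_product split_beta)
  also have "\<dots> = (\<Sum>x\<in>D. sum F (coset_pair_orbit G H K x))"
    unfolding coset_pair_orbit_def using repA(2) repB(2)
    by (intro sum_split_unique[OF fin] D_reps) auto
  also have "\<dots> = (\<Sum>x\<in>D. sum F (coset_pair_orbit G H K (inv (y x) \<otimes> (y x \<otimes> x))))"
    using y D_sub by (intro sum.cong refl) (auto simp flip: m_assoc)
  also have "\<dots> = (\<Sum>x\<in>D. transfer G act (carrier G) (conjset G (y x) H \<inter> conjset G (y x \<otimes> x) K)
                    (act (y x) \<alpha> * act (y x \<otimes> x) \<beta>))"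
    unfolding F_def using y D_sub by (intro sum.cong refl transfer_product_orbit[OF H K \<alpha> \<beta>]) auto
  finally show ?thesis .
qed

end

locale graded_ring_action = ring_action G act
  for G :: "('g, 'm) monoid_scheme" (structure) and act :: "'g \<Rightarrow> 'a::ring \<Rightarrow> 'a" +
  fixes comp :: "'g \<Rightarrow> 'a set"
  assumes comp_zero: "u \<in> carrier G \<Longrightarrow> 0 \<in> comp u"
    and comp_add: "u \<in> carrier G \<Longrightarrow> a \<in> comp u \<Longrightarrow> b \<in> comp u \<Longrightarrow> a + b \<in> comp u"
    and comp_mult: "u \<in> carrier G \<Longrightarrow> v \<in> carrier G \<Longrightarrow> a \<in> comp u \<Longrightarrow> b \<in> comp v
                       \<Longrightarrow> a * b \<in> comp (u \<otimes> v)"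
    and act_comp: "x \<in> carrier G \<Longrightarrow> u \<in> carrier G \<Longrightarrow> a \<in> comp u \<Longrightarrow> act x a \<in> comp (conjg G x u)"
begin

lemma twisted_product:
  assumes g: "g \<in> carrier G" and h: "h \<in> carrier G" and y: "y \<in> carrier G" and z: "z \<in> carrier G"
    and \<alpha>: "\<alpha> \<in> comp g \<inter> invariants act (centr G g)"
    and \<beta>: "\<beta> \<in> comp h \<inter> invariants act (centr G h)"
  shows "act y \<alpha> * act z \<beta> \<in> comp (conjg G y g \<otimes> conjg G z h)
           \<inter> invariants act (conjset G y (centr G g) \<inter> conjset G z (centr G h))"
proof
  show "act y \<alpha> * act z \<beta> \<in> comp (conjg G y g \<otimes> conjg G z h)"
    using \<alpha> \<beta> g h y z by (intro comp_mult act_comp) (auto simp: conjg_def)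
  have "act y \<alpha> \<in> invariants act (conjset G y (centr G g))"
    and "act z \<beta> \<in> invariants act (conjset G z (centr G h))"
    using act_invariant_conj \<alpha> \<beta> y z by (auto simp: centr_def)
  moreover have "conjset G y (centr G g) \<subseteq> carrier G" "conjset G z (centr G h) \<subseteq> carrier G"
    using mem_conjset[of "centr G g" y] mem_conjset[of "centr G h" z] y z by (auto simp: centr_def)
  ultimately show "act y \<alpha> * act z \<beta> \<in> invariants act (conjset G y (centr G g) \<inter> conjset G z (centr G h))"
    by (auto simp: invariants_def act_times)
qed

lemma transfer_to_centraliser:
  assumes k: "k \<in> carrier G" and J: "subgroup J G" and Jk: "J \<subseteq> centr G k"
    and a: "a \<in> comp k \<inter> invariants act J"
  shows "transfer G act (centr G k) J a \<in> comp k \<inter> invariants act (centr G k)"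
proof
  have Z: "subgroup (centr G k) G" by (rule centr_subgroup[OF k])
  note rep = lcosets_in_rep[OF J Z Jk]
  show "transfer G act (centr G k) J a \<in> comp k"
    unfolding transfer_eq_coset_reps
  proof (rule sum_in_closed[OF comp_zero[OF k] comp_add[OF k]])
    fix c assume c: "c \<in> lcosets_in G (centr G k) J"
    have "act (coset_rep c) a \<in> comp (conjg G (coset_rep c) k)"
      using act_comp[OF rep(2)[OF c] k] a by blast
    then show "act (coset_rep c) a \<in> comp k" using conjg_centr[OF rep(1)[OF c] k] by simp
  qed
  show "transfer G act (centr G k) J a \<in> invariants act (centr G k)"
    using transfer_invariant[OF J Z Jk] a by blast
qed

end

theorem theorem11p3:
  fixes G :: "('g, 'm) monoid_scheme"
    and act :: "'g \<Rightarrow> 'a::ring \<Rightarrow> 'a"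
    and comp :: "'g \<Rightarrow> 'a set"
    and C D :: "'g set"
    and k y :: "'g \<Rightarrow> 'g"
    and g h :: 'g
    and \<alpha> \<beta> :: 'a
  assumes grp: "group G" and fin: "finite (carrier G)"
    \<comment> \<open>G-graded ring: direct sum of additive subgroups, multiplicatively graded\<close>
    and comp_zero: "\<And>u. u \<in> carrier G \<Longrightarrow> 0 \<in> comp u"
    and comp_add: "\<And>u a b. u \<in> carrier G \<Longrightarrow> a \<in> comp u \<Longrightarrow> b \<in> comp u \<Longrightarrow> a + b \<in> comp u"
    and comp_uminus: "\<And>u a. u \<in> carrier G \<Longrightarrow> a \<in> comp u \<Longrightarrow> - a \<in> comp u"
    and direct_sum: "\<And>a. \<exists>!f. (\<forall>u\<in>carrier G. f u \<in> comp u) \<and> (\<forall>u. u \<notin> carrier G \<longrightarrow> f u = 0)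
                              \<and> a = (\<Sum>u\<in>carrier G. f u)"
    and comp_mult: "\<And>u v a b. u \<in> carrier G \<Longrightarrow> v \<in> carrier G \<Longrightarrow> a \<in> comp u \<Longrightarrow> b \<in> comp v
                       \<Longrightarrow> a * b \<in> comp (u \<otimes>\<^bsub>G\<^esub> v)"
    \<comment> \<open>G acts by ring automorphisms, mapping the u-component to the x u x^-1-component\<close>
    and act_one: "\<And>a. act \<one>\<^bsub>G\<^esub> a = a"
    and act_mult: "\<And>x z a. x \<in> carrier G \<Longrightarrow> z \<in> carrier G \<Longrightarrow> act (x \<otimes>\<^bsub>G\<^esub> z) a = act x (act z a)"
    and act_add: "\<And>x a b. x \<in> carrier G \<Longrightarrow> act x (a + b) = act x a + act x b"
    and act_times: "\<And>x a b. x \<in> carrier G \<Longrightarrow> act x (a * b) = act x a * act x b"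
    and act_comp: "\<And>x u a. x \<in> carrier G \<Longrightarrow> u \<in> carrier G \<Longrightarrow> a \<in> comp u
                       \<Longrightarrow> act x a \<in> comp (conjg G x u)"
    \<comment> \<open>C: set of representatives of the conjugacy classes of G\<close>
    and C_sub: "C \<subseteq> carrier G"
    and C_reps: "\<And>u. u \<in> carrier G \<Longrightarrow> \<exists>!c. c \<in> C \<and> (\<exists>z\<in>carrier G. c = conjg G z u)"
    and g: "g \<in> C" and h: "h \<in> C"
    and \<alpha>: "\<alpha> \<in> comp g \<inter> invariants act (centr G g)"
    and \<beta>: "\<beta> \<in> comp h \<inter> invariants act (centr G h)"
    \<comment> \<open>D: set of representatives of the double cosets Z(g) \ G / Z(h)\<close>
    and D_sub: "D \<subseteq> carrier G"
    and D_reps: "\<And>z. z \<in> carrier G \<Longrightarrow> \<exists>!x. x \<in> D \<and> z \<in> double_coset G (centr G g) x (centr G h)"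
    and k_y: "\<And>x. x \<in> D \<Longrightarrow> k x \<in> C \<and> y x \<in> carrier G \<and>
                conjg G (y x) g \<otimes>\<^bsub>G\<^esub> conjg G (y x \<otimes>\<^bsub>G\<^esub> x) h = k x"
  shows "(\<forall>x\<in>D. transfer G act (centr G (k x))
                    (conjset G (y x) (centr G g) \<inter> conjset G (y x \<otimes>\<^bsub>G\<^esub> x) (centr G h))
                    (act (y x) \<alpha> * act (y x \<otimes>\<^bsub>G\<^esub> x) \<beta>)
                  \<in> comp (k x) \<inter> invariants act (centr G (k x)))
       \<and> transfer G act (carrier G) (centr G g) \<alpha> * transfer G act (carrier G) (centr G h) \<beta>
         = (\<Sum>x\<in>D. transfer G act (carrier G) (centr G (k x))
                     (transfer G act (centr G (k x))
                        (conjset G (y x) (centr G g) \<inter> conjset G (y x \<otimes>\<^bsub>G\<^esub> x) (centr G h))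
                        (act (y x) \<alpha> * act (y x \<otimes>\<^bsub>G\<^esub> x) \<beta>)))"
proof -
  interpret graded_ring_action G act comp
    unfolding graded_ring_action_def graded_ring_action_axioms_def ring_action_def
      ring_action_axioms_def linear_action_def linear_action_axioms_def
    using grp fin act_mult act_add act_times comp_zero comp_add comp_mult act_comp by blast
  define J where "J x = conjset G (y x) (centr G g) \<inter> conjset G (y x \<otimes>\<^bsub>G\<^esub> x) (centr G h)" for x
  define P where "P x = act (y x) \<alpha> * act (y x \<otimes>\<^bsub>G\<^esub> x) \<beta>" for x
  have gh: "g \<in> carrier G" "h \<in> carrier G" using g h C_sub by auto
  have yk: "y x \<in> carrier G" "y x \<otimes>\<^bsub>G\<^esub> x \<in> carrier G" "k x \<in> carrier G" if "x \<in> D" for x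
    using k_y[OF that] D_sub C_sub that by auto
  have stabiliser: "subgroup (J x) G" "J x \<subseteq> centr G (k x)"
    and product: "P x \<in> comp (k x) \<inter> invariants act (J x)" if "x \<in> D" for x
    using twisted_stabiliser[OF gh yk(1,2)[OF that]] twisted_product[OF gh yk(1,2)[OF that] \<alpha> \<beta>]
      k_y[OF that] unfolding J_def P_def by auto
  have "\<forall>x\<in>D. transfer G act (centr G (k x)) (J x) (P x) \<in> comp (k x) \<inter> invariants act (centr G (k x))"
    using transfer_to_centraliser[OF yk(3) stabiliser product] by blast
  moreover have "transfer G act (carrier G) (centr G g) \<alpha> * transfer G act (carrier G) (centr G h) \<beta>
      = (\<Sum>x\<in>D. transfer G act (carrier G) (J x) (P x))"
    unfolding J_def P_def
    using mackey_product_formula[OF centr_subgroup centr_subgroup _ _ D_sub D_reps] gh \<alpha> \<beta> yk by blast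
  moreover have "\<dots> = (\<Sum>x\<in>D. transfer G act (carrier G) (centr G (k x))
                              (transfer G act (centr G (k x)) (J x) (P x)))"
    using transfer_trans[OF stabiliser(1) centr_subgroup stabiliser(2)] product yk(3) by simp
  ultimately show ?thesis unfolding J_def P_def by simp
qed

end
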